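(* Let $\mathscr G=(\mathscr V,\mathscr E)$ be a finite connected graph with $N$ vertices, let $M\ge 0$ be an integer, and let $(Z_t)_{t\in\mathbb N}$ be the uniform saving model on $\mathscr G$ with $M$ coins, started from an arbitrary configuration. Then for every vertex $x\in\mathscr V$ and every $c\in\{0,1,\dots,M\}$, $$\lim_{t\to\infty}P(Z_t(x)=c)=(c+1)\binom{M-c+2N-3}{2N-3}\Big/\binom{M+2N-1}{2N-1}.$$ In particular, when $N$ and $T=M/N$ are large, $\lim_{t\to\infty}P(Z_t(x)=c)\approx \frac{4c}{T^2} e^{-2c/T}$.
   Context: A configuration is a map $\xi:\mathscr V\to\mathbb N$; $\mathscr C_{N,M}$ denotes the set of configurations with $\sum_x\xi(x)=M$. The uniform saving model is the discrete-time Markov chain on $\mathscr C_{N,M}$ evolving as follows: at each time step $t$, an edge $(x,y)\in\mathscr E$ is chosen uniformly at random; independent random variables $U_1$ uniform on $\{0,\dots,Z_t(x)\}$ and $U_2$ uniform on $\{0,\dots,Z_t(y)\}$ are drawn; given $U_1=c_x$, $U_2=c_y$, a random variable $U$ uniform on $\{0,1,\dots,Z_t(x)+Z_t(y)-c_x-c_y\}$ is drawn; then $Z_{t+1}(x)=c_x+U$, $Z_{t+1}(y)=Z_t(x)+Z_t(y)-c_x-U$, and $Z_{t+1}(z)=Z_t(z)$ for $z\notin\{x,y\}$. *)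

theory Defs
  imports "HOL-Probability.Probability"
begin

text \<open>Graph: finite vertex set V, edges as ordered pairs (each undirected edge listed once,
  in an arbitrary orientation; the transition is symmetric in the two endpoints).
  Configurations: functions 'a \<Rightarrow> nat vanishing outside V.\<close>

definition saving_step :: "('a \<times> 'a) set \<Rightarrow> ('a \<Rightarrow> nat) \<Rightarrow> ('a \<Rightarrow> nat) pmf" where
  "saving_step E z =
     do { (x, y) \<leftarrow> pmf_of_set E;
          cx \<leftarrow> pmf_of_set {0 .. z x};
          cy \<leftarrow> pmf_of_set {0 .. z y};
          u \<leftarrow> pmf_of_set {0 .. z x + z y - cx - cy};
          return_pmf (z(x := cx + u, y := z x + z y - cx - u)) }"

fun saving_dist :: "('a \<times> 'a) set \<Rightarrow> ('a \<Rightarrow> nat) \<Rightarrow> nat \<Rightarrow> ('a \<Rightarrow> nat) pmf" where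
  "saving_dist E z0 0 = return_pmf z0"
| "saving_dist E z0 (Suc t) = bind_pmf (saving_dist E z0 t) (saving_step E)"

definition simple_connected_graph :: "'a set \<Rightarrow> ('a \<times> 'a) set \<Rightarrow> bool" where
  "simple_connected_graph V E \<longleftrightarrow>
     finite V \<and> E \<subseteq> V \<times> V \<and> (\<forall>(x, y)\<in>E. x \<noteq> y \<and> (y, x) \<notin> E) \<and>
     (\<forall>x\<in>V. \<forall>y\<in>V. (x, y) \<in> (E \<union> E\<inverse>)\<^sup>*)"

end

(*
  Every single-edge update is reversible with respect to the weight
  w(z) = prod_v (z v + 1) on configurations: the probability of moving from z to eta,
  multiplied by (z a + 1)(z b + 1), is a symmetric function of z and eta.  Hence the
  normalised weight is stationary.  The chain is lazy, and every configuration can reach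
  the one with all coins on a single vertex by pushing coins along paths, so on the finite
  set of configurations a Doeblin minorisation gives convergence in total variation.
  Summing the weights with sum_j (j + 1) C(M - j + m, m) = C(M + m + 2, m + 2) gives the
  total C(M + 2N - 1, 2N - 1), and fixing z x = c leaves the factor c + 1 times the total
  for the remaining N - 1 vertices.
*)
theory Submission
  imports Defs
begin

section \<open>Convergence of finite Markov chains\<close>

definition transition_rel :: "('b \<Rightarrow> 'b pmf) \<Rightarrow> ('b \<times> 'b) set" where
  "transition_rel K = {(s, s'). s' \<in> set_pmf (K s)}"

definition stationary_on :: "'b set \<Rightarrow> ('b \<Rightarrow> 'b pmf) \<Rightarrow> ('b \<Rightarrow> real) \<Rightarrow> bool" where
  "stationary_on S K \<pi> \<longleftrightarrow> (\<forall>\<eta>\<in>S. (\<Sum>\<xi>\<in>S. \<pi> \<xi> * pmf (K \<xi>) \<eta>) = \<pi> \<eta>)"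

lemma funpow_bind_pmf_eq_bind:
  fixes K :: "'b \<Rightarrow> 'b pmf"
  shows "((\<lambda>q. bind_pmf q K) ^^ n) p = bind_pmf p (\<lambda>s. ((\<lambda>q. bind_pmf q K) ^^ n) (return_pmf s))"
  by (induction n) (simp_all add: bind_return_pmf' bind_assoc_pmf)

lemma set_pmf_funpow_bind_subset:
  fixes K :: "'b \<Rightarrow> 'b pmf"
  assumes "\<And>s. s \<in> S \<Longrightarrow> set_pmf (K s) \<subseteq> S" "set_pmf p \<subseteq> S"
  shows "set_pmf (((\<lambda>q. bind_pmf q K) ^^ n) p) \<subseteq> S"
  by (induction n) (use assms in auto)

lemma pmf_bind_finite_support:
  assumes "finite S" "set_pmf p \<subseteq> S"
  shows "pmf (bind_pmf p K) \<eta> = (\<Sum>\<xi>\<in>S. pmf p \<xi> * pmf (K \<xi>) \<eta>)"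
proof -
  have "pmf (bind_pmf p K) \<eta> = (\<Sum>\<xi>\<in>S. pmf (K \<xi>) \<eta> * pmf p \<xi>)"
    unfolding pmf_bind using assms by (intro integral_measure_pmf_real) auto
  then show ?thesis by (simp add: mult.commute)
qed

lemma stationary_on_funpow:
  fixes K :: "'b \<Rightarrow> 'b pmf"
  assumes "finite S" "\<And>s. s \<in> S \<Longrightarrow> set_pmf (K s) \<subseteq> S" "stationary_on S K \<pi>"
  shows "stationary_on S (\<lambda>s. ((\<lambda>q. bind_pmf q K) ^^ n) (return_pmf s)) \<pi>"
  unfolding stationary_on_def
proof (induction n)
  case 0
  show ?case using assms(1) by (simp add: pmf_return indicator_def if_distrib sum.delta' cong: if_cong)
next
  case (Suc n)
  let ?Kn = "\<lambda>\<xi>. ((\<lambda>q. bind_pmf q K) ^^ n) (return_pmf \<xi>)"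
  have closed: "set_pmf (?Kn \<xi>) \<subseteq> S" if "\<xi> \<in> S" for \<xi>
    using that assms(2) by (intro set_pmf_funpow_bind_subset) auto
  show ?case
  proof
    fix \<eta> assume "\<eta> \<in> S"
    have "(\<Sum>\<xi>\<in>S. \<pi> \<xi> * pmf (bind_pmf (?Kn \<xi>) K) \<eta>)
        = (\<Sum>\<xi>\<in>S. \<pi> \<xi> * (\<Sum>\<zeta>\<in>S. pmf (?Kn \<xi>) \<zeta> * pmf (K \<zeta>) \<eta>))"
      using closed assms(1) by (simp add: pmf_bind_finite_support)
    also have "\<dots> = (\<Sum>\<zeta>\<in>S. (\<Sum>\<xi>\<in>S. \<pi> \<xi> * pmf (?Kn \<xi>) \<zeta>) * pmf (K \<zeta>) \<eta>)"
      by (simp add: sum_distrib_left sum_distrib_right mult.assoc) (rule sum.swap)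
    also have "\<dots> = \<pi> \<eta>"
      using Suc.IH assms(3) \<open>\<eta> \<in> S\<close> unfolding stationary_on_def by simp
    finally show "(\<Sum>\<xi>\<in>S. \<pi> \<xi> * pmf (((\<lambda>q. bind_pmf q K) ^^ Suc n) (return_pmf \<xi>)) \<eta>) = \<pi> \<eta>"
      by simp
  qed
qed

lemma detailed_balance_imp_stationary_on:
  assumes "finite S" "\<And>s. s \<in> S \<Longrightarrow> set_pmf (K s) \<subseteq> S"
    and balance: "\<And>\<xi> \<eta>. \<xi> \<in> S \<Longrightarrow> \<eta> \<in> S \<Longrightarrow> w \<xi> * pmf (K \<xi>) \<eta> = w \<eta> * pmf (K \<eta>) \<xi>"
  shows "stationary_on S K w"
  unfolding stationary_on_def
proof
  fix \<eta> assume "\<eta> \<in> S"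
  then have "(\<Sum>\<xi>\<in>S. w \<xi> * pmf (K \<xi>) \<eta>) = w \<eta> * (\<Sum>\<xi>\<in>S. pmf (K \<eta>) \<xi>)"
    by (simp add: balance sum_distrib_left)
  also have "\<dots> = w \<eta>" using assms(1,2) \<open>\<eta> \<in> S\<close> by (simp add: sum_pmf_eq_1)
  finally show "(\<Sum>\<xi>\<in>S. w \<xi> * pmf (K \<xi>) \<eta>) = w \<eta>" .
qed

lemma doeblin_contraction:
  fixes Q :: "'b \<Rightarrow> 'b pmf"
  assumes S: "finite S" "set_pmf p \<subseteq> S" "\<And>s. s \<in> S \<Longrightarrow> set_pmf (Q s) \<subseteq> S"
    and minorized: "hub \<in> S" "\<And>s. s \<in> S \<Longrightarrow> \<delta> \<le> pmf (Q s) hub"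
    and \<pi>: "stationary_on S Q \<pi>" "sum \<pi> S = 1"
  shows "(\<Sum>\<eta>\<in>S. \<bar>pmf (bind_pmf p Q) \<eta> - \<pi> \<eta>\<bar>) \<le> (1 - \<delta>) * (\<Sum>\<xi>\<in>S. \<bar>pmf p \<xi> - \<pi> \<xi>\<bar>)"
proof -
  define d where "d \<xi> = pmf p \<xi> - \<pi> \<xi>" for \<xi>
  \<comment> \<open>removing the common mass \<open>\<delta>\<close> at \<open>hub\<close> does not change the action on \<open>d\<close>, as \<open>sum d S = 0\<close>\<close>
  define Q' where "Q' \<xi> \<eta> = pmf (Q \<xi>) \<eta> - (if \<eta> = hub then \<delta> else 0)" for \<xi> \<eta>
  have "sum d S = 0" unfolding d_def using S \<pi>(2) by (simp add: sum_subtractf sum_pmf_eq_1)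
  have Q'_nonneg: "Q' \<xi> \<eta> \<ge> 0" if "\<xi> \<in> S" for \<xi> \<eta>
    unfolding Q'_def using minorized(2)[OF that] by auto
  have Q'_row: "(\<Sum>\<eta>\<in>S. Q' \<xi> \<eta>) = 1 - \<delta>" if "\<xi> \<in> S" for \<xi>
    unfolding Q'_def using S that minorized(1) by (simp add: sum_subtractf sum_pmf_eq_1)
  have diff: "pmf (bind_pmf p Q) \<eta> - \<pi> \<eta> = (\<Sum>\<xi>\<in>S. d \<xi> * Q' \<xi> \<eta>)" if "\<eta> \<in> S" for \<eta>
  proof -
    have "(\<Sum>\<xi>\<in>S. d \<xi> * Q' \<xi> \<eta>) = (\<Sum>\<xi>\<in>S. d \<xi> * pmf (Q \<xi>) \<eta>) - sum d S * (if \<eta> = hub then \<delta> else 0)"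
      unfolding Q'_def by (simp add: algebra_simps sum_subtractf sum_distrib_right)
    also have "\<dots> = pmf (bind_pmf p Q) \<eta> - \<pi> \<eta>"
      using \<open>sum d S = 0\<close> \<pi>(1) that S(1,2) unfolding d_def stationary_on_def
      by (simp add: pmf_bind_finite_support algebra_simps sum_subtractf)
    finally show ?thesis by simp
  qed
  have "(\<Sum>\<eta>\<in>S. \<bar>pmf (bind_pmf p Q) \<eta> - \<pi> \<eta>\<bar>) \<le> (\<Sum>\<eta>\<in>S. \<Sum>\<xi>\<in>S. \<bar>d \<xi>\<bar> * Q' \<xi> \<eta>)"
  proof (rule sum_mono)
    fix \<eta> assume "\<eta> \<in> S"
    have "\<bar>\<Sum>\<xi>\<in>S. d \<xi> * Q' \<xi> \<eta>\<bar> \<le> (\<Sum>\<xi>\<in>S. \<bar>d \<xi> * Q' \<xi> \<eta>\<bar>)" by (rule sum_abs)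
    also have "\<dots> = (\<Sum>\<xi>\<in>S. \<bar>d \<xi>\<bar> * Q' \<xi> \<eta>)"
      by (intro sum.cong refl) (simp add: abs_mult Q'_nonneg)
    finally show "\<bar>pmf (bind_pmf p Q) \<eta> - \<pi> \<eta>\<bar> \<le> (\<Sum>\<xi>\<in>S. \<bar>d \<xi>\<bar> * Q' \<xi> \<eta>)"
      using diff[OF \<open>\<eta> \<in> S\<close>] by simp
  qed
  also have "\<dots> = (\<Sum>\<xi>\<in>S. \<bar>d \<xi>\<bar> * (\<Sum>\<eta>\<in>S. Q' \<xi> \<eta>))"
    by (simp add: sum_distrib_left) (rule sum.swap)
  also have "\<dots> = (1 - \<delta>) * (\<Sum>\<xi>\<in>S. \<bar>pmf p \<xi> - \<pi> \<xi>\<bar>)"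
    by (simp add: Q'_row sum_distrib_left mult.commute d_def)
  finally show ?thesis .
qed

lemma LIMSEQ_zero_of_contraction:
  fixes D :: "nat \<Rightarrow> real"
  assumes "\<And>t. 0 \<le> D t" "\<And>t. D t \<le> B"
    and contr: "\<And>t. D (t + k) \<le> c * D t" and "0 \<le> c" "c < 1" "k > 0"
  shows "D \<longlonglongrightarrow> 0"
proof -
  have iter: "D (t + n * k) \<le> c ^ n * D t" for t n
  proof (induction n)
    case (Suc n)
    have "D (t + Suc n * k) \<le> c * D (t + n * k)"
      using contr[of "t + n * k"] by (simp add: algebra_simps)
    also have "\<dots> \<le> c * (c ^ n * D t)" using Suc \<open>0 \<le> c\<close> by (rule mult_left_mono)
    also have "\<dots> = c ^ Suc n * D t" by simp
    finally show ?case .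
  qed simp
  have bound: "D t \<le> B * c ^ (t div k)" for t
  proof -
    have "D t \<le> c ^ (t div k) * D (t mod k)"
      using iter[of "t mod k" "t div k"] by (simp add: add.commute)
    also have "\<dots> \<le> c ^ (t div k) * B" using assms(2) \<open>0 \<le> c\<close> by (simp add: mult_left_mono)
    finally show ?thesis by (simp add: mult.commute)
  qed
  have "filterlim (\<lambda>t. t div k) at_top sequentially"
    unfolding filterlim_at_top eventually_sequentially
    by (metis \<open>k > 0\<close> div_le_mono div_mult_self1_is_m)
  then have "(\<lambda>t. B * c ^ (t div k)) \<longlonglongrightarrow> 0"
    using assms(4,5) by (intro tendsto_mult_right_zero filterlim_compose[OF LIMSEQ_power_zero]) auto
  then show ?thesis
    by (rule tendsto_sandwich[rotated 2, OF tendsto_const]) (use assms(1) bound in auto)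
qed

lemma eventually_relpow_of_rtrancl:
  assumes "(s, hub) \<in> R\<^sup>*" "(hub, hub) \<in> R"
  shows "eventually (\<lambda>n. (s, hub) \<in> R ^^ n) sequentially"
proof -
  obtain k where k: "(s, hub) \<in> R ^^ k" using assms(1) rtrancl_power by blast
  have "(s, hub) \<in> R ^^ (k + j)" for j
    by (induction j) (use k assms(2) in auto)
  then show ?thesis unfolding eventually_sequentially by (metis le_add_diff_inverse)
qed

lemma set_pmf_funpow_bind_of_relpow:
  fixes K :: "'b \<Rightarrow> 'b pmf"
  assumes "(s, s') \<in> transition_rel K ^^ n"
  shows "s' \<in> set_pmf (((\<lambda>q. bind_pmf q K) ^^ n) (return_pmf s))"
  using assms by (induction n arbitrary: s') (auto simp: transition_rel_def)

lemma funpow_bind_minorised: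
  fixes K :: "'b \<Rightarrow> 'b pmf"
  assumes "finite S" "hub \<in> S" "hub \<in> set_pmf (K hub)"
    and irreducible: "\<And>s. s \<in> S \<Longrightarrow> (s, hub) \<in> (transition_rel K)\<^sup>*"
  obtains n \<delta> where "n > 0" "0 < \<delta>" "\<delta> \<le> 1"
    "\<And>s. s \<in> S \<Longrightarrow> \<delta> \<le> pmf (((\<lambda>q. bind_pmf q K) ^^ n) (return_pmf s)) hub"
proof -
  let ?Q = "\<lambda>n s. ((\<lambda>q. bind_pmf q K) ^^ n) (return_pmf s)"
  have "eventually (\<lambda>n. \<forall>s\<in>S. (s, hub) \<in> transition_rel K ^^ n) sequentially"
    using assms(1,3) irreducible
    by (intro eventually_ball_finite ballI eventually_relpow_of_rtrancl) (auto simp: transition_rel_def)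
  then obtain N where N: "\<forall>m\<ge>N. \<forall>s\<in>S. (s, hub) \<in> transition_rel K ^^ m"
    unfolding eventually_sequentially by blast
  have reach: "hub \<in> set_pmf (?Q (Suc N) s)" if "s \<in> S" for s
    by (rule set_pmf_funpow_bind_of_relpow) (use N[rule_format, of "Suc N"] that in simp)
  define \<delta> where "\<delta> = Min ((\<lambda>s. pmf (?Q (Suc N) s) hub) ` S)"
  have \<delta>: "\<delta> \<le> pmf (?Q (Suc N) s) hub" if "s \<in> S" for s
    unfolding \<delta>_def using assms(1) that by (intro Min_le) auto
  show ?thesis
  proof
    show "0 < \<delta>"
      unfolding \<delta>_def using assms(1,2) reach by (subst Min_gr_iff) (auto simp: pmf_positive)
    show "\<delta> \<le> 1" using \<delta>[OF assms(2)] pmf_le_1[of "?Q (Suc N) hub" hub] by linarith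
  qed (use \<delta> in auto)
qed

theorem finite_markov_chain_convergence:
  fixes K :: "'b \<Rightarrow> 'b pmf"
  assumes S: "finite S" "\<And>s. s \<in> S \<Longrightarrow> set_pmf (K s) \<subseteq> S" "set_pmf p \<subseteq> S"
    and aperiodic: "hub \<in> S" "hub \<in> set_pmf (K hub)"
    and irreducible: "\<And>s. s \<in> S \<Longrightarrow> (s, hub) \<in> (transition_rel K)\<^sup>*"
    and \<pi>: "stationary_on S K \<pi>" "sum \<pi> S = 1"
  shows "(\<lambda>t. \<Sum>s\<in>S. \<bar>pmf (((\<lambda>q. bind_pmf q K) ^^ t) p) s - \<pi> s\<bar>) \<longlonglongrightarrow> 0"
proof -
  define Q where "Q n s = ((\<lambda>q. bind_pmf q K) ^^ n) (return_pmf s)" for n s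
  obtain n \<delta> where "n > 0" "0 < \<delta>" "\<delta> \<le> 1" and \<delta>: "\<And>s. s \<in> S \<Longrightarrow> \<delta> \<le> pmf (Q n s) hub"
    using funpow_bind_minorised[OF S(1) aperiodic irreducible] unfolding Q_def by metis
  define D where "D t = (\<Sum>s\<in>S. \<bar>pmf (((\<lambda>q. bind_pmf q K) ^^ t) p) s - \<pi> s\<bar>)" for t
  have law_in_S: "set_pmf (((\<lambda>q. bind_pmf q K) ^^ t) p) \<subseteq> S" for t
    by (rule set_pmf_funpow_bind_subset[OF S(2,3)])
  have Q_closed: "set_pmf (Q n s) \<subseteq> S" if "s \<in> S" for s
    unfolding Q_def using S(2) that by (intro set_pmf_funpow_bind_subset) auto
  have Q_stationary: "stationary_on S (Q n) \<pi>"
    unfolding Q_def using S(1,2) \<pi>(1) by (rule stationary_on_funpow)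
  show "D \<longlonglongrightarrow> 0"
  proof (rule LIMSEQ_zero_of_contraction)
    show "D t \<le> 1 + (\<Sum>s\<in>S. \<bar>\<pi> s\<bar>)" for t
    proof -
      have "D t \<le> (\<Sum>s\<in>S. pmf (((\<lambda>q. bind_pmf q K) ^^ t) p) s + \<bar>\<pi> s\<bar>)"
        unfolding D_def by (intro sum_mono) (metis abs_of_nonneg abs_triangle_ineq4 pmf_nonneg)
      then show ?thesis using S(1) law_in_S by (simp add: sum.distrib sum_pmf_eq_1)
    qed
    show "D (t + n) \<le> (1 - \<delta>) * D t" for t
    proof -
      have "((\<lambda>q. bind_pmf q K) ^^ (t + n)) p = bind_pmf (((\<lambda>q. bind_pmf q K) ^^ t) p) (Q n)"
        unfolding Q_def add.commute[of t] funpow_add comp_apply by (rule funpow_bind_pmf_eq_bind)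
      then show ?thesis
        unfolding D_def
        using doeblin_contraction[OF S(1) law_in_S Q_closed aperiodic(1) \<delta> Q_stationary \<pi>(2)] by simp
    qed
    show "0 \<le> D t" for t unfolding D_def by (simp add: sum_nonneg)
  qed (use \<open>n > 0\<close> \<open>0 < \<delta>\<close> \<open>\<delta> \<le> 1\<close> in auto)
qed

lemma measure_pmf_tendsto_of_l1_tendsto:
  assumes "finite S" "\<And>t. set_pmf (P t) \<subseteq> S"
    and "(\<lambda>t. \<Sum>s\<in>S. \<bar>pmf (P t) s - \<pi> s\<bar>) \<longlonglongrightarrow> 0"
  shows "(\<lambda>t. measure_pmf.prob (P t) A) \<longlonglongrightarrow> (\<Sum>s\<in>S \<inter> A. \<pi> s)"
proof (rule LIM_zero_cancel, rule Lim_null_comparison[OF _ assms(3)], intro always_eventually allI)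
  fix t
  have "measure_pmf.prob (P t) A = measure_pmf.prob (P t) (S \<inter> A)"
    using assms(2)[of t] measure_Int_set_pmf[of "P t" A] measure_Int_set_pmf[of "P t" "S \<inter> A"]
    by (simp add: Int_absorb1 Int_assoc Int_commute)
  also have "\<dots> = (\<Sum>s\<in>S \<inter> A. pmf (P t) s)"
    using assms(1) by (simp add: measure_measure_pmf_finite)
  finally have "norm (measure_pmf.prob (P t) A - (\<Sum>s\<in>S \<inter> A. \<pi> s)) = \<bar>\<Sum>s\<in>S \<inter> A. pmf (P t) s - \<pi> s\<bar>"
    by (simp add: sum_subtractf)
  also have "\<dots> \<le> (\<Sum>s\<in>S \<inter> A. \<bar>pmf (P t) s - \<pi> s\<bar>)" by (rule sum_abs)
  also have "\<dots> \<le> (\<Sum>s\<in>S. \<bar>pmf (P t) s - \<pi> s\<bar>)"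
    using assms(1) by (intro sum_mono2) auto
  finally show "norm (measure_pmf.prob (P t) A - (\<Sum>s\<in>S \<inter> A. \<pi> s)) \<le> (\<Sum>s\<in>S. \<bar>pmf (P t) s - \<pi> s\<bar>)" .
qed

section \<open>Binomial sums\<close>

lemma sum_atMost_add_choose: "(\<Sum>i\<le>n. (i + m) choose m) = (n + m + 1) choose (m + 1)"
proof (induction n)
  case (Suc n)
  then have "(\<Sum>i\<le>Suc n. (i + m) choose m) = ((n + m + 1) choose (m + 1)) + ((Suc n + m) choose m)"
    by simp
  then show ?case by (simp add: add.commute)
qed simp

lemma sum_atMost_weighted_choose:
  "(\<Sum>j\<le>M. (j + 1) * ((M - j + m) choose m)) = (M + m + 2) choose (m + 2)"
proof (induction M)
  case (Suc M)
  have "(\<Sum>j\<le>Suc M. (j + 1) * ((Suc M - j + m) choose m))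
      = (\<Sum>j\<le>M. (j + 1) * ((M - j + m) choose m)) + ((\<Sum>j\<le>M. (M - j + m) choose m) + ((Suc M + m) choose m))"
    by (subst sum.atMost_Suc_shift) (simp add: sum.distrib)
  also have "(\<Sum>j\<le>M. (M - j + m) choose m) = (\<Sum>i\<le>M. (i + m) choose m)"
    by (rule sum.reindex_bij_witness[of _ "\<lambda>i. M - i" "\<lambda>i. M - i"]) auto
  also have "\<dots> + ((Suc M + m) choose m) = (Suc M + m + 1) choose (m + 1)"
    using sum_atMost_add_choose[where n = "Suc M" and m = m] by (simp only: sum.atMost_Suc)
  also have "(\<Sum>j\<le>M. (j + 1) * ((M - j + m) choose m)) + \<dots>
      = ((M + m + 2) choose (m + 2)) + ((Suc M + m + 1) choose (m + 1))"
    by (simp only: Suc.IH)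
  also have "\<dots> = (Suc M + m + 2) choose (m + 2)"
    by (simp add: numeral_2_eq_2)
  finally show ?case .
qed simp

section \<open>The uniform saving model\<close>

definition edge_step :: "'a \<Rightarrow> 'a \<Rightarrow> ('a \<Rightarrow> nat) \<Rightarrow> ('a \<Rightarrow> nat) pmf" where
  "edge_step a b z =
     do { cx \<leftarrow> pmf_of_set {0 .. z a};
          cy \<leftarrow> pmf_of_set {0 .. z b};
          u \<leftarrow> pmf_of_set {0 .. z a + z b - cx - cy};
          return_pmf (z(a := cx + u, b := z a + z b - cx - u)) }"

lemma saving_step_eq_bind_edge_step:
  "saving_step E z = pmf_of_set E \<bind> (\<lambda>(a, b). edge_step a b z)"
  unfolding saving_step_def edge_step_def by simp

lemma saving_dist_eq_funpow_bind:
  "saving_dist E z0 t = ((\<lambda>q. bind_pmf q (saving_step E)) ^^ t) (return_pmf z0)"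
  by (induction t) simp_all

definition redistributes :: "'a \<Rightarrow> 'a \<Rightarrow> ('a \<Rightarrow> nat) \<Rightarrow> ('a \<Rightarrow> nat) \<Rightarrow> bool" where
  "redistributes a b z \<eta> \<longleftrightarrow> (\<forall>v. v \<noteq> a \<longrightarrow> v \<noteq> b \<longrightarrow> \<eta> v = z v) \<and> \<eta> a + \<eta> b = z a + z b"

lemma redistributes_sym: "redistributes a b z \<eta> \<longleftrightarrow> redistributes a b \<eta> z"
  unfolding redistributes_def by auto

definition redistribution_mass :: "'a \<Rightarrow> 'a \<Rightarrow> ('a \<Rightarrow> nat) \<Rightarrow> ('a \<Rightarrow> nat) \<Rightarrow> real" where
  "redistribution_mass a b z \<eta> =
     (\<Sum>cx\<in>{0..min (z a) (\<eta> a)}. \<Sum>cy\<in>{0..min (z b) (\<eta> b)}. 1 / real (z a + z b - cx - cy + 1))"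

lemma redistribution_mass_sym:
  assumes "redistributes a b z \<eta>"
  shows "redistribution_mass a b z \<eta> = redistribution_mass a b \<eta> z"
  using assms unfolding redistribution_mass_def redistributes_def by (simp add: min.commute)

text \<open>Only the share \<open>u = \<eta> a - cx\<close> can lead to \<open>\<eta>\<close>.\<close>
lemma sum_indicator_edge_update:
  assumes "a \<noteq> b" "cx \<le> z a" "cy \<le> z b"
  shows "(\<Sum>u\<in>{0..z a + z b - cx - cy}. indicator {\<eta>} (z(a := cx + u, b := z a + z b - cx - u)) :: real)
       = (if redistributes a b z \<eta> \<and> cx \<le> \<eta> a \<and> cy \<le> \<eta> b then 1 else 0)"
proof -
  let ?C = "redistributes a b z \<eta> \<and> cx \<le> \<eta> a \<and> cy \<le> \<eta> b"
  have "z(a := cx + u, b := z a + z b - cx - u) = \<eta> \<longleftrightarrow>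
        \<eta> a = cx + u \<and> \<eta> b = z a + z b - cx - u \<and> (\<forall>v. v \<noteq> a \<longrightarrow> v \<noteq> b \<longrightarrow> \<eta> v = z v)" for u
    using assms(1) by (auto simp: fun_eq_iff)
  then have "z(a := cx + u, b := z a + z b - cx - u) = \<eta> \<longleftrightarrow> u = \<eta> a - cx \<and> ?C"
    if "u \<le> z a + z b - cx - cy" for u
    using assms that unfolding redistributes_def by auto
  then have "(\<Sum>u\<in>{0..z a + z b - cx - cy}. indicator {\<eta>} (z(a := cx + u, b := z a + z b - cx - u)) :: real)
      = (\<Sum>u\<in>{0..z a + z b - cx - cy}. if u = \<eta> a - cx then (if ?C then 1 else 0) else 0)"
    by (intro sum.cong) (auto simp: indicator_def)
  then show ?thesis
    using assms unfolding redistributes_def by (auto simp: sum.delta)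
qed

lemma pmf_edge_step:
  assumes "a \<noteq> b"
  shows "pmf (edge_step a b z) \<eta> =
    (if redistributes a b z \<eta> then redistribution_mass a b z \<eta> else 0) / (real (z a + 1) * real (z b + 1))"
proof -
  let ?f = "\<lambda>cx cy. if redistributes a b z \<eta> \<and> cx \<le> \<eta> a \<and> cy \<le> \<eta> b
                      then 1 / real (z a + z b - cx - cy + 1) else 0"
  have nonempty: "{0..n} \<noteq> {}" for n :: nat by simp
  have "pmf (edge_step a b z) \<eta> = (\<Sum>cx\<in>{0..z a}. (\<Sum>cy\<in>{0..z b}.
      (\<Sum>u\<in>{0..z a + z b - cx - cy}. indicator {\<eta>} (z(a := cx + u, b := z a + z b - cx - u)))
        / real (card {0..z a + z b - cx - cy})) / real (card {0..z b})) / real (card {0..z a})"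
    unfolding edge_step_def
    by (simp only: pmf_bind_pmf_of_set nonempty finite_atLeastAtMost pmf_return not_False_eq_True)
  also have "\<dots> = (\<Sum>cx\<in>{0..z a}. (\<Sum>cy\<in>{0..z b}. ?f cx cy) / real (z b + 1)) / real (z a + 1)"
  proof (intro arg_cong2[where f = "(/)"] sum.cong refl)
    fix cx cy assume "cx \<in> {0..z a}" "cy \<in> {0..z b}"
    then show "(\<Sum>u\<in>{0..z a + z b - cx - cy}. indicator {\<eta>} (z(a := cx + u, b := z a + z b - cx - u)))
        / real (card {0..z a + z b - cx - cy}) = ?f cx cy"
      using sum_indicator_edge_update[OF assms, where cx = cx and cy = cy and \<eta> = \<eta>] by simp
  qed simp_all
  also have "\<dots> = (\<Sum>cx\<in>{0..z a}. \<Sum>cy\<in>{0..z b}. ?f cx cy) / (real (z a + 1) * real (z b + 1))"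
    by (simp add: sum_divide_distrib[symmetric] divide_divide_eq_left mult.commute)
  also have "(\<Sum>cx\<in>{0..z a}. \<Sum>cy\<in>{0..z b}. ?f cx cy)
      = (if redistributes a b z \<eta> then redistribution_mass a b z \<eta> else 0)"
  proof (cases "redistributes a b z \<eta>")
    case True
    let ?g = "\<lambda>cx cy. 1 / real (z a + z b - cx - cy + 1)"
    have "(\<Sum>cx\<in>{0..z a}. \<Sum>cy\<in>{0..z b}. ?f cx cy)
        = (\<Sum>cx\<in>{0..z a}. if cx \<le> \<eta> a then (\<Sum>cy\<in>{0..z b}. if cy \<le> \<eta> b then ?g cx cy else 0) else 0)"
      using True by (intro sum.cong) auto
    also have "\<dots> = (\<Sum>cx\<in>{0..z a} \<inter> {cx. cx \<le> \<eta> a}. \<Sum>cy\<in>{0..z b} \<inter> {cy. cy \<le> \<eta> b}. ?g cx cy)"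
      by (simp only: sum.inter_restrict finite_atLeastAtMost mem_Collect_eq)
    also have "\<dots> = redistribution_mass a b z \<eta>"
    proof -
      have "{0..p} \<inter> {c. c \<le> q} = {0..min p q}" for p q :: nat by auto
      then show ?thesis unfolding redistribution_mass_def by simp
    qed
    finally show ?thesis using True by simp
  qed simp
  finally show ?thesis .
qed

definition configs :: "'a set \<Rightarrow> nat \<Rightarrow> ('a \<Rightarrow> nat) set" where
  "configs V M = {z. (\<forall>v. v \<notin> V \<longrightarrow> z v = 0) \<and> sum z V = M}"

definition config_weight :: "'a set \<Rightarrow> ('a \<Rightarrow> nat) \<Rightarrow> nat" where
  "config_weight V z = (\<Prod>v\<in>V. z v + 1)"

lemma config_weight_remove2:
  assumes "finite V" "a \<in> V" "b \<in> V" "a \<noteq> b"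
  shows "config_weight V z = (z a + 1) * (z b + 1) * config_weight (V - {a, b}) z"
proof -
  have "config_weight V z = (z a + 1) * config_weight (V - {a}) z"
    unfolding config_weight_def using assms by (simp add: prod.remove)
  also have "config_weight (V - {a}) z = (z b + 1) * config_weight (V - {a} - {b}) z"
    unfolding config_weight_def using assms by (subst prod.remove[of _ b]) auto
  also have "V - {a} - {b} = V - {a, b}" by auto
  finally show ?thesis by (simp only: mult.assoc)
qed

lemma weighted_pmf_edge_step:
  assumes "finite V" "a \<in> V" "b \<in> V" "a \<noteq> b"
  shows "real (config_weight V z) * pmf (edge_step a b z) \<eta> =
    (if redistributes a b z \<eta> then real (config_weight (V - {a, b}) z) * redistribution_mass a b z \<eta> else 0)"
proof -
  have "real (z a + 1) * real (z b + 1) \<noteq> 0" by simp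
  then show ?thesis
    unfolding pmf_edge_step[OF assms(4)] config_weight_remove2[OF assms] of_nat_mult by simp
qed

lemma edge_step_detailed_balance:
  assumes "finite V" "a \<in> V" "b \<in> V" "a \<noteq> b"
  shows "real (config_weight V z) * pmf (edge_step a b z) \<eta>
       = real (config_weight V \<eta>) * pmf (edge_step a b \<eta>) z"
proof (cases "redistributes a b z \<eta>")
  case True
  then have "config_weight (V - {a, b}) z = config_weight (V - {a, b}) \<eta>"
    unfolding config_weight_def redistributes_def by (intro prod.cong) auto
  then show ?thesis
    unfolding weighted_pmf_edge_step[OF assms]
    using True redistributes_sym[of a b z \<eta>] redistribution_mass_sym[OF True] by simp
qed (simp add: weighted_pmf_edge_step[OF assms] redistributes_sym)

lemma finite_configs: "finite V \<Longrightarrow> finite (configs V M)"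
proof -
  assume "finite V"
  have "configs V M \<subseteq> {f. \<forall>x. (x \<in> V \<longrightarrow> f x \<in> {0..M}) \<and> (x \<notin> V \<longrightarrow> f x = 0)}"
    unfolding configs_def using \<open>finite V\<close> by (auto intro: member_le_sum)
  then show ?thesis
    by (rule finite_subset) (intro finite_set_of_finite_funs \<open>finite V\<close> finite_atLeastAtMost)
qed

lemma sum_configs_insert:
  fixes f :: "('a \<Rightarrow> nat) \<Rightarrow> 'b::comm_monoid_add"
  assumes "finite V" "a \<notin> V"
  shows "(\<Sum>z\<in>configs (insert a V) M. f z) = (\<Sum>j\<le>M. \<Sum>\<zeta>\<in>configs V (M - j). f (\<zeta>(a := j)))"
proof -
  have "(\<Sum>j\<le>M. \<Sum>\<zeta>\<in>configs V (M - j). f (\<zeta>(a := j)))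
      = (\<Sum>(j, \<zeta>)\<in>Sigma {..M} (\<lambda>j. configs V (M - j)). f (\<zeta>(a := j)))"
    using assms(1) by (subst sum.Sigma) (simp_all add: finite_configs)
  also have "\<dots> = (\<Sum>z\<in>configs (insert a V) M. f z)"
  proof (rule sum.reindex_bij_witness[of _ "\<lambda>z. (z a, z(a := 0))" "\<lambda>(j, \<zeta>). \<zeta>(a := j)"])
    fix z assume "z \<in> configs (insert a V) M"
    moreover have "sum (z(a := 0)) V = sum z V" using assms by (intro sum.cong) auto
    ultimately show "(z a, z(a := 0)) \<in> Sigma {..M} (\<lambda>j. configs V (M - j))"
      using assms unfolding configs_def by auto
  next
    fix p assume p: "p \<in> Sigma {..M} (\<lambda>j. configs V (M - j))"
    then obtain j \<zeta> where [simp]: "p = (j, \<zeta>)" and "j \<le> M" "\<zeta> \<in> configs V (M - j)" by auto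
    moreover have "sum (\<zeta>(a := j)) V = sum \<zeta> V" using assms by (intro sum.cong) auto
    ultimately show "(case p of (j, \<zeta>) \<Rightarrow> \<zeta>(a := j)) \<in> configs (insert a V) M"
      "((case p of (j, \<zeta>) \<Rightarrow> \<zeta>(a := j)) a, (case p of (j, \<zeta>) \<Rightarrow> \<zeta>(a := j))(a := 0)) = p"
      using assms unfolding configs_def by (auto simp: fun_eq_iff)
  qed auto
  finally show ?thesis ..
qed

lemma config_weight_insert_upd:
  assumes "a \<notin> V" "finite V"
  shows "config_weight (insert a V) (\<zeta>(a := j)) = (j + 1) * config_weight V \<zeta>"
proof -
  have "(\<Prod>v\<in>V. (\<zeta>(a := j)) v + 1) = (\<Prod>v\<in>V. \<zeta> v + 1)" using assms by (intro prod.cong) auto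
  then show ?thesis using assms unfolding config_weight_def by simp
qed

lemma sum_config_weight:
  assumes "finite V" "V \<noteq> {}"
  shows "(\<Sum>z\<in>configs V M. config_weight V z) = (M + 2 * card V - 1) choose (2 * card V - 1)"
  using assms
proof (induction V arbitrary: M rule: finite_ne_induct)
  case (singleton a)
  have "configs {a} M = {(\<lambda>_. 0)(a := M)}" unfolding configs_def by (auto simp: fun_eq_iff)
  then show ?case by (simp add: config_weight_def)
next
  case (insert a V)
  have "card V > 0" using insert card_gt_0_iff by blast
  have "(\<Sum>z\<in>configs (insert a V) M. config_weight (insert a V) z)
      = (\<Sum>j\<le>M. (j + 1) * (\<Sum>\<zeta>\<in>configs V (M - j). config_weight V \<zeta>))"
    by (simp only: sum_configs_insert[OF insert.hyps(1,3)] config_weight_insert_upd[OF insert.hyps(3,1)]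
        sum_distrib_left)
  also have "\<dots> = (\<Sum>j\<le>M. (j + 1) * ((M - j + (2 * card V - 1)) choose (2 * card V - 1)))"
  proof -
    have "M - j + 2 * card V - 1 = M - j + (2 * card V - 1)" for j using \<open>card V > 0\<close> by simp
    then show ?thesis by (simp only: insert.IH)
  qed
  also have "\<dots> = (M + (2 * card V - 1) + 2) choose ((2 * card V - 1) + 2)"
    by (rule sum_atMost_weighted_choose)
  also have "\<dots> = (M + 2 * card (insert a V) - 1) choose (2 * card (insert a V) - 1)"
    using insert \<open>card V > 0\<close> by simp
  finally show ?case .
qed

lemma sum_config_weight_at_vertex:
  assumes "finite V" "x \<in> V" "c \<le> M"
  shows "(\<Sum>z\<in>configs V M \<inter> {z. z x = c}. config_weight V z)
       = (c + 1) * (\<Sum>\<zeta>\<in>configs (V - {x}) (M - c). config_weight (V - {x}) \<zeta>)"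
proof -
  have V: "V = insert x (V - {x})" using assms by auto
  have "(\<Sum>z\<in>configs V M \<inter> {z. z x = c}. config_weight V z)
      = (\<Sum>z\<in>configs V M. if z x = c then config_weight V z else 0)"
    using finite_configs[OF assms(1)] by (simp add: sum.inter_restrict)
  also have "\<dots> = (\<Sum>j\<le>M. \<Sum>\<zeta>\<in>configs (V - {x}) (M - j). if j = c then config_weight V (\<zeta>(x := j)) else 0)"
    using assms(1) by (subst V, subst sum_configs_insert) (auto simp flip: V)
  also have "\<dots> = (\<Sum>j\<le>M. if j = c then (\<Sum>\<zeta>\<in>configs (V - {x}) (M - j). config_weight V (\<zeta>(x := j))) else 0)"
    by (intro sum.cong) auto
  also have "\<dots> = (\<Sum>\<zeta>\<in>configs (V - {x}) (M - c). config_weight V (\<zeta>(x := c)))"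
    using assms by (simp add: sum.delta)
  also have "\<dots> = (\<Sum>\<zeta>\<in>configs (V - {x}) (M - c). (c + 1) * config_weight (V - {x}) \<zeta>)"
    using config_weight_insert_upd[of x "V - {x}"] assms(1) V by (intro sum.cong) auto
  finally show ?thesis by (simp add: sum_distrib_left)
qed

lemma pmf_saving_step:
  assumes "finite E" "E \<noteq> {}"
  shows "pmf (saving_step E z) \<eta> = (\<Sum>(a, b)\<in>E. pmf (edge_step a b z) \<eta>) / real (card E)"
  unfolding saving_step_eq_bind_edge_step using assms by (simp add: pmf_bind_pmf_of_set split_beta)

lemma set_pmf_saving_step:
  assumes "finite E" "E \<noteq> {}"
  shows "set_pmf (saving_step E z) = (\<Union>(a, b)\<in>E. set_pmf (edge_step a b z))"
  unfolding saving_step_eq_bind_edge_step using assms by (simp add: split_beta)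

lemma set_pmf_edge_step:
  "set_pmf (edge_step a b z) = {z(a := cx + u, b := z a + z b - cx - u) | cx cy u.
     cx \<le> z a \<and> cy \<le> z b \<and> u \<le> z a + z b - cx - cy}"
  unfolding edge_step_def by (auto simp: set_pmf_of_set; fastforce)

lemma sum_fun_upd2:
  fixes z :: "'a \<Rightarrow> 'b::comm_monoid_add"
  assumes "finite V" "a \<in> V" "b \<in> V" "a \<noteq> b" "p + q = z a + z b"
  shows "sum (z(a := p, b := q)) V = sum z V"
proof -
  have split: "sum f V = f a + f b + sum f (V - {a, b})" for f :: "'a \<Rightarrow> 'b"
    using assms(1-4) by (simp add: sum.remove[of V a] sum.remove[of "V - {a}" b] insert_commute
        Diff_insert2[symmetric] add.assoc)
  have "sum (z(a := p, b := q)) (V - {a, b}) = sum z (V - {a, b})" by (intro sum.cong) auto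
  then show ?thesis using assms(4,5) split[of z] split[of "z(a := p, b := q)"] by simp
qed

lemma set_pmf_edge_step_subset_configs:
  assumes "finite V" "a \<in> V" "b \<in> V" "a \<noteq> b" "z \<in> configs V M"
  shows "set_pmf (edge_step a b z) \<subseteq> configs V M"
proof
  fix z' assume "z' \<in> set_pmf (edge_step a b z)"
  then obtain cx cy u where z': "z' = z(a := cx + u, b := z a + z b - cx - u)"
    and share: "cx \<le> z a" "u \<le> z a + z b - cx - cy"
    unfolding set_pmf_edge_step by blast
  have "sum z' V = sum z V"
    unfolding z' by (rule sum_fun_upd2[OF assms(1-4)]) (use share in arith)
  then show "z' \<in> configs V M" using assms z' unfolding configs_def by auto
qed

locale saving_graph =
  fixes V :: "'a set" and E :: "('a \<times> 'a) set"
  assumes graph: "simple_connected_graph V E" and edges_nonempty: "E \<noteq> {}"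
begin

lemma finite_vertices: "finite V"
  and edges_subset: "E \<subseteq> V \<times> V"
  and loop_free: "(a, b) \<in> E \<Longrightarrow> a \<noteq> b"
  and connected: "u \<in> V \<Longrightarrow> v \<in> V \<Longrightarrow> (u, v) \<in> (E \<union> E\<inverse>)\<^sup>*"
  using graph unfolding simple_connected_graph_def by auto

lemma finite_edges: "finite E"
  using finite_vertices edges_subset finite_subset by blast

lemma saving_step_detailed_balance:
  "real (config_weight V z) * pmf (saving_step E z) \<eta> = real (config_weight V \<eta>) * pmf (saving_step E \<eta>) z"
proof -
  have "real (config_weight V z) * (\<Sum>(a, b)\<in>E. pmf (edge_step a b z) \<eta>)
      = real (config_weight V \<eta>) * (\<Sum>(a, b)\<in>E. pmf (edge_step a b \<eta>) z)"
    unfolding sum_distrib_left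
    using finite_vertices edges_subset loop_free
    by (intro sum.cong refl) (auto intro: edge_step_detailed_balance)
  then show ?thesis
    unfolding pmf_saving_step[OF finite_edges edges_nonempty] by (simp add: field_simps)
qed

lemma set_pmf_saving_step_subset_configs:
  "z \<in> configs V M \<Longrightarrow> set_pmf (saving_step E z) \<subseteq> configs V M"
  unfolding set_pmf_saving_step[OF finite_edges edges_nonempty]
  using set_pmf_edge_step_subset_configs[OF finite_vertices] edges_subset loop_free by blast

lemma edge_step_in_transition_rel:
  assumes "(a, b) \<in> E" "cx \<le> z a" "cy \<le> z b" "u \<le> z a + z b - cx - cy"
  shows "(z, z(a := cx + u, b := z a + z b - cx - u)) \<in> transition_rel (saving_step E)"
proof -
  have "z(a := cx + u, b := z a + z b - cx - u) \<in> set_pmf (edge_step a b z)"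
    unfolding set_pmf_edge_step using assms(2-4) by blast
  then show ?thesis
    using assms(1) unfolding transition_rel_def set_pmf_saving_step[OF finite_edges edges_nonempty] by auto
qed

lemma self_in_set_pmf_saving_step: "z \<in> set_pmf (saving_step E z)"
proof -
  obtain a b where "(a, b) \<in> E" using edges_nonempty by auto
  from edge_step_in_transition_rel[OF this, of "z a" z 0 0] show ?thesis
    by (simp add: transition_rel_def)
qed

lemma empty_vertex_in_transition_rel:
  assumes "(v, w) \<in> E \<union> E\<inverse>"
  shows "(z, z(v := 0, w := z v + z w)) \<in> transition_rel (saving_step E)"
proof (cases "(v, w) \<in> E")
  case True
  from edge_step_in_transition_rel[OF True, of 0 z 0 0] show ?thesis by simp
next
  case False
  with assms have "(w, v) \<in> E" by auto
  from edge_step_in_transition_rel[OF this, of 0 z 0 "z w + z v"] loop_free[OF this] show ?thesis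
    by (simp add: fun_upd_twist add.commute)
qed

lemma configs_closed_rtrancl:
  "(z, z') \<in> (transition_rel (saving_step E))\<^sup>* \<Longrightarrow> z \<in> configs V M \<Longrightarrow> z' \<in> configs V M"
  by (induction rule: rtrancl_induct)
    (use set_pmf_saving_step_subset_configs in \<open>auto simp: transition_rel_def\<close>)

text \<open>Push all coins of \<open>v\<close> one edge at a time along a path to \<open>x0\<close>.\<close>
lemma empty_vertex_along_path:
  assumes "(v, x0) \<in> (E \<union> E\<inverse>)\<^sup>*"
  shows "\<exists>z'. (z, z') \<in> (transition_rel (saving_step E))\<^sup>* \<and> (v \<noteq> x0 \<longrightarrow> z' v = 0) \<and>
              (\<forall>u. u \<noteq> x0 \<and> z u = 0 \<longrightarrow> z' u = 0)"
  using assms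
proof (induction arbitrary: z rule: converse_rtrancl_induct)
  case (step v w)
  show ?case
  proof (cases "v = x0")
    case False
    have "v \<noteq> w" using step.hyps(1) loop_free by auto
    define z1 where "z1 = z(v := 0, w := z v + z w)"
    obtain z' where z': "(z1, z') \<in> (transition_rel (saving_step E))\<^sup>*" "w \<noteq> x0 \<longrightarrow> z' w = 0"
        "\<forall>u. u \<noteq> x0 \<and> z1 u = 0 \<longrightarrow> z' u = 0"
      using step.IH by blast
    have "(z, z') \<in> (transition_rel (saving_step E))\<^sup>*"
      using empty_vertex_in_transition_rel[OF step.hyps(1)] z'(1) unfolding z1_def
      by (rule converse_rtrancl_into_rtrancl)
    moreover have "z' v = 0" using z'(3) False \<open>v \<noteq> w\<close> unfolding z1_def by auto
    moreover have "z' u = 0" if "u \<noteq> x0" "z u = 0" for u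
      using z'(2,3) that unfolding z1_def by (cases "u = w") auto
    ultimately show ?thesis by blast
  qed blast
qed blast

lemma concentrate_coins:
  assumes "finite U" "\<forall>v\<in>U. (v, x0) \<in> (E \<union> E\<inverse>)\<^sup>*" "\<forall>u. u \<notin> U \<and> u \<noteq> x0 \<longrightarrow> z u = 0"
  shows "\<exists>z'. (z, z') \<in> (transition_rel (saving_step E))\<^sup>* \<and> (\<forall>u. u \<noteq> x0 \<longrightarrow> z' u = 0)"
  using assms
proof (induction U arbitrary: z rule: finite_induct)
  case (insert a U)
  obtain z1 where z1: "(z, z1) \<in> (transition_rel (saving_step E))\<^sup>*" "a \<noteq> x0 \<longrightarrow> z1 a = 0"
      "\<forall>u. u \<noteq> x0 \<and> z u = 0 \<longrightarrow> z1 u = 0"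
    using empty_vertex_along_path insert.prems(1) by blast
  have z1_support: "\<forall>u. u \<notin> U \<and> u \<noteq> x0 \<longrightarrow> z1 u = 0"
  proof (intro allI impI)
    fix u assume "u \<notin> U \<and> u \<noteq> x0"
    then show "z1 u = 0" using z1(2,3) insert.prems(2) by (cases "u = a") auto
  qed
  obtain z' where
    "(z1, z') \<in> (transition_rel (saving_step E))\<^sup>*" "\<forall>u. u \<noteq> x0 \<longrightarrow> z' u = 0"
    using insert.IH[OF _ z1_support] insert.prems(1) by blast
  then show ?case using z1(1) by (meson rtrancl_trans)
qed auto

lemma reaches_concentrated_config:
  assumes "z \<in> configs V M" "x0 \<in> V"
  shows "(z, (\<lambda>_. 0)(x0 := M)) \<in> (transition_rel (saving_step E))\<^sup>*"
proof -
  obtain z' where z': "(z, z') \<in> (transition_rel (saving_step E))\<^sup>*" "\<forall>u. u \<noteq> x0 \<longrightarrow> z' u = 0"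
    using concentrate_coins[OF finite_vertices, of x0 z] connected assms unfolding configs_def by auto
  have "z' \<in> configs V M" using configs_closed_rtrancl[OF z'(1) assms(1)] .
  moreover have "sum z' V = z' x0"
    using finite_vertices assms(2) z'(2) by (subst sum.remove[of V x0]) auto
  ultimately have "z' = (\<lambda>_. 0)(x0 := M)" using z'(2) unfolding configs_def by (auto simp: fun_eq_iff)
  then show ?thesis using z'(1) by simp
qed

lemma stationary_on_configs:
  "stationary_on (configs V M) (saving_step E) (\<lambda>z. real (config_weight V z) / W)"
proof (rule detailed_balance_imp_stationary_on)
  show "real (config_weight V \<xi>) / W * pmf (saving_step E \<xi>) \<eta>
      = real (config_weight V \<eta>) / W * pmf (saving_step E \<eta>) \<xi>" for \<xi> \<eta>
    using saving_step_detailed_balance[of \<xi> \<eta>] by (simp add: times_divide_eq_left)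
qed (use finite_configs[OF finite_vertices] set_pmf_saving_step_subset_configs in auto)

lemma saving_dist_tendsto:
  assumes "z0 \<in> configs V M"
  shows "(\<lambda>t. measure_pmf.prob (saving_dist E z0 t) A)
    \<longlonglongrightarrow> real (\<Sum>z\<in>configs V M \<inter> A. config_weight V z)
          / real ((M + 2 * card V - 1) choose (2 * card V - 1))"
proof -
  let ?S = "configs V M" and ?W = "real ((M + 2 * card V - 1) choose (2 * card V - 1))"
  obtain x0 where "x0 \<in> V" using edges_nonempty edges_subset by auto
  define hub where "hub = (\<lambda>_. 0 :: nat)(x0 := M)"
  have "finite ?S" by (rule finite_configs[OF finite_vertices])
  have hub: "hub \<in> ?S" "\<And>z. z \<in> ?S \<Longrightarrow> (z, hub) \<in> (transition_rel (saving_step E))\<^sup>*"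
    unfolding hub_def using reaches_concentrated_config[OF _ \<open>x0 \<in> V\<close>]
      configs_closed_rtrancl[OF reaches_concentrated_config[OF assms \<open>x0 \<in> V\<close>] assms] by auto
  have "sum (\<lambda>z. real (config_weight V z)) ?S = ?W"
    using sum_config_weight[OF finite_vertices] \<open>x0 \<in> V\<close> by (auto simp flip: of_nat_sum)
  moreover have "?W > 0" by simp
  ultimately have "sum (\<lambda>z. real (config_weight V z) / ?W) ?S = 1"
    by (simp add: sum_divide_distrib[symmetric])
  then have l1: "(\<lambda>t. \<Sum>z\<in>?S. \<bar>pmf (saving_dist E z0 t) z - real (config_weight V z) / ?W\<bar>) \<longlonglongrightarrow> 0"
    unfolding saving_dist_eq_funpow_bind
    using \<open>finite ?S\<close> set_pmf_saving_step_subset_configs assms hub self_in_set_pmf_saving_step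
      stationary_on_configs
    by (intro finite_markov_chain_convergence[where hub = hub]) auto
  have "(\<lambda>t. measure_pmf.prob (saving_dist E z0 t) A)
      \<longlonglongrightarrow> (\<Sum>z\<in>?S \<inter> A. real (config_weight V z) / ?W)"
  proof (rule measure_pmf_tendsto_of_l1_tendsto[OF \<open>finite ?S\<close> _ l1])
    show "set_pmf (saving_dist E z0 t) \<subseteq> ?S" for t
      unfolding saving_dist_eq_funpow_bind
      by (rule set_pmf_funpow_bind_subset) (use set_pmf_saving_step_subset_configs assms in auto)
  qed
  then show ?thesis by (simp add: sum_divide_distrib[symmetric] of_nat_sum)
qed

end

lemma simple_connected_graph_edges_nonempty:
  assumes "simple_connected_graph V E" "card V \<ge> 2"
  shows "E \<noteq> {}"
proof
  assume "E = {}"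
  have "finite V" using assms(1) unfolding simple_connected_graph_def by simp
  then have "\<not> (\<forall>x\<in>V. \<forall>y\<in>V. x = y)" using assms(2) card_le_Suc0_iff_eq[of V] by simp
  then obtain x y where "x \<in> V" "y \<in> V" "x \<noteq> y" by blast
  with assms(1) \<open>E = {}\<close> show False unfolding simple_connected_graph_def by auto
qed

theorem theorem3:
  fixes V :: "'a set" and E :: "('a \<times> 'a) set" and N M :: nat and z0 :: "'a \<Rightarrow> nat"
    and x :: 'a and c :: nat
  assumes "simple_connected_graph V E"
    and "card V = N" and "N \<ge> 2"
    and "\<forall>v. v \<notin> V \<longrightarrow> z0 v = 0" and "(\<Sum>v\<in>V. z0 v) = M"
    and "x \<in> V" and "c \<le> M"
  shows "(\<lambda>t. measure_pmf.prob (saving_dist E z0 t) {z. z x = c})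
           \<longlonglongrightarrow> real (c + 1) * real ((M - c + 2 * N - 3) choose (2 * N - 3))
                 / real ((M + 2 * N - 1) choose (2 * N - 1))"
proof -
  interpret saving_graph V E
    using assms(1-3) simple_connected_graph_edges_nonempty by unfold_locales auto
  have "z0 \<in> configs V M" unfolding configs_def using assms(4,5) by auto
  have "card (V - {x}) = N - 1" using assms(2,6) finite_vertices by simp
  moreover from this have "V - {x} \<noteq> {}" using assms(3) by (intro notI) simp
  moreover have "M - c + 2 * (N - 1) - 1 = M - c + 2 * N - 3" "2 * (N - 1) - 1 = 2 * N - 3"
    using assms(3) by auto
  ultimately have "(\<Sum>z\<in>configs V M \<inter> {z. z x = c}. config_weight V z)
      = (c + 1) * ((M - c + 2 * N - 3) choose (2 * N - 3))"
    unfolding sum_config_weight_at_vertex[OF finite_vertices assms(6,7)]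
      sum_config_weight[OF finite_Diff[OF finite_vertices] \<open>V - {x} \<noteq> {}\<close>] by simp
  then show ?thesis
    using saving_dist_tendsto[OF \<open>z0 \<in> configs V M\<close>, of "{z. z x = c}"] assms(2)
    by (simp add: ring_distribs)
qed

end
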